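(* Let $k,n$ be positive integers and let $G$ be a graph on $n$ vertices. Then $G\in\mathcal{F}(n,k)$ if and only if $G$ is $k$-maximal.
   Context: Graphs are finite, loopless, possibly with multiple edges. $\kappa'(G)$ is the edge connectivity and $\overline{\kappa'}(G)=\max\{\kappa'(H): H \text{ a subgraph of } G\}$. A graph $G$ is $k$-maximal if $\overline{\kappa'}(G)\le k$ but for any new edge $e\notin E(G)$ joining two vertices of $G$ (possibly parallel to an existing edge), $\overline{\kappa'}(G+e)\ge k+1$. $F(n,k)$ is the maximum number of edges of a graph on $n$ vertices with $\overline{\kappa'}\le k$, and $\mathcal{F}(n,k)=\{G: |V(G)|=n,\ \overline{\kappa'}(G)\le k,\ |E(G)|=F(n,k)\}$. *)

theory Defs
  imports Main
begin

text \<open>A finite loopless multigraph is a pair (V, m): a finite vertex set V and a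
symmetric multiplicity function m (m x y = number of edges joining x and y),
vanishing on the diagonal (no loops) and outside V.\<close>

definition multigraph :: "'a set \<Rightarrow> ('a \<Rightarrow> 'a \<Rightarrow> nat) \<Rightarrow> bool" where
  "multigraph V m \<longleftrightarrow> finite V \<and> (\<forall>x y. m x y = m y x) \<and> (\<forall>x. m x x = 0)
     \<and> (\<forall>x y. m x y \<noteq> 0 \<longrightarrow> x \<in> V \<and> y \<in> V)"

definition num_edges :: "'a set \<Rightarrow> ('a \<Rightarrow> 'a \<Rightarrow> nat) \<Rightarrow> nat" where
  "num_edges V m = (\<Sum>x\<in>V. \<Sum>y\<in>V. m x y) div 2"

definition cut_size :: "('a \<Rightarrow> 'a \<Rightarrow> nat) \<Rightarrow> 'a set \<Rightarrow> 'a set \<Rightarrow> nat" where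
  "cut_size m S T = (\<Sum>x\<in>S. \<Sum>y\<in>T. m x y)"

definition edge_conn :: "'a set \<Rightarrow> ('a \<Rightarrow> 'a \<Rightarrow> nat) \<Rightarrow> nat" where
  "edge_conn V m = (if card V \<le> 1 then 0
     else Min {cut_size m S (V - S) | S. S \<subseteq> V \<and> S \<noteq> {} \<and> S \<noteq> V})"

definition subgraph :: "'a set \<Rightarrow> ('a \<Rightarrow> 'a \<Rightarrow> nat) \<Rightarrow> 'a set \<Rightarrow> ('a \<Rightarrow> 'a \<Rightarrow> nat) \<Rightarrow> bool" where
  "subgraph W h V m \<longleftrightarrow> multigraph W h \<and> W \<subseteq> V \<and> (\<forall>x y. h x y \<le> m x y)"

text \<open>max_ec_le k V m  means  \<open>\<kappa>'-bar(G) \<le> k\<close>, i.e. every subgraph has edge connectivity at most k.\<close>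
definition max_ec_le :: "nat \<Rightarrow> 'a set \<Rightarrow> ('a \<Rightarrow> 'a \<Rightarrow> nat) \<Rightarrow> bool" where
  "max_ec_le k V m \<longleftrightarrow> (\<forall>W h. subgraph W h V m \<longrightarrow> edge_conn W h \<le> k)"

definition add_edge :: "('a \<Rightarrow> 'a \<Rightarrow> nat) \<Rightarrow> 'a \<Rightarrow> 'a \<Rightarrow> ('a \<Rightarrow> 'a \<Rightarrow> nat)" where
  "add_edge m u v = (\<lambda>x y. if (x = u \<and> y = v) \<or> (x = v \<and> y = u) then m x y + 1 else m x y)"

definition k_maximal :: "nat \<Rightarrow> 'a set \<Rightarrow> ('a \<Rightarrow> 'a \<Rightarrow> nat) \<Rightarrow> bool" where
  "k_maximal k V m \<longleftrightarrow> max_ec_le k V m \<and>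
     (\<forall>u\<in>V. \<forall>v\<in>V. u \<noteq> v \<longrightarrow> \<not> max_ec_le k V (add_edge m u v))"

text \<open>F(n,k): maximum number of edges of a graph on n vertices with \<kappa>'-bar \<le> k
(vertices taken from nat; edge numbers are invariant under relabelling).\<close>
definition F_max :: "nat \<Rightarrow> nat \<Rightarrow> nat" where
  "F_max n k = Sup {num_edges W h | W (h :: nat \<Rightarrow> nat \<Rightarrow> nat).
      multigraph W h \<and> card W = n \<and> max_ec_le k W h}"

definition in_F_family :: "nat \<Rightarrow> nat \<Rightarrow> 'a set \<Rightarrow> ('a \<Rightarrow> 'a \<Rightarrow> nat) \<Rightarrow> bool" where
  "in_F_family n k V m \<longleftrightarrow> multigraph V m \<and> card V = n \<and> max_ec_le k V m
     \<and> num_edges V m = F_max n k"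

end

theory Submission
  imports Defs
begin

text \<open>Both directions rest on one count: a graph on n vertices with every subgraph of edge
connectivity at most k has at most k(n-1) edges, with equality for k-maximal graphs.
Split the vertex set along a minimum cut S, V - S; that cut has at most k edges, both sides
inherit the hypothesis, and induction gives k(|S|-1) + k(|V-S|-1) + k = k(n-1). For a
k-maximal graph the sides are again k-maximal, and the minimum cut has exactly k edges,
since adding an edge across it must create a subgraph of connectivity above k, which can only
use the k+1 edges then crossing the cut. Hence F(n,k) = k(n-1): the upper bound is attained
because a graph with the maximum number of edges is k-maximal. A graph with
\<open>\<kappa>'-bar \<le> k\<close> and k(n-1) edges is k-maximal because one more edge would exceed the bound,
and a k-maximal graph has k(n-1) edges by the count above.\<close>

definition induced :: "('a \<Rightarrow> 'a \<Rightarrow> nat) \<Rightarrow> 'a set \<Rightarrow> ('a \<Rightarrow> 'a \<Rightarrow> nat)" where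
  "induced m S = (\<lambda>x y. if x \<in> S \<and> y \<in> S then m x y else 0)"

lemma cut_size_mono:
  assumes "finite C" "finite D" "A \<subseteq> C" "B \<subseteq> D" "\<And>x y. h x y \<le> g x y"
  shows "cut_size h A B \<le> cut_size g C D"
proof -
  have "cut_size h A B \<le> cut_size g A B"
    unfolding cut_size_def by (intro sum_mono) (simp add: assms(5))
  also have "\<dots> \<le> (\<Sum>x\<in>A. \<Sum>y\<in>D. g x y)"
    unfolding cut_size_def by (intro sum_mono sum_mono2) (use assms in auto)
  also have "\<dots> \<le> cut_size g C D"
    unfolding cut_size_def by (intro sum_mono2) (use assms in auto)
  finally show ?thesis .
qed

lemma cut_size_Un_left:
  assumes "finite A" "finite B" "A \<inter> B = {}"
  shows "cut_size m (A \<union> B) C = cut_size m A C + cut_size m B C"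
  unfolding cut_size_def using assms by (simp add: sum.union_disjoint)

lemma cut_size_Un_right:
  assumes "finite A" "finite B" "A \<inter> B = {}"
  shows "cut_size m C (A \<union> B) = cut_size m C A + cut_size m C B"
  unfolding cut_size_def using assms by (simp add: sum.union_disjoint sum.distrib)

lemma cut_size_commute:
  assumes "multigraph V m"
  shows "cut_size m A B = cut_size m B A"
  using assms unfolding cut_size_def multigraph_def by (subst sum.swap) simp

lemma cut_size_self_split:
  assumes "multigraph V m" "S \<subseteq> V"
  shows "cut_size m V V = cut_size m S S + cut_size m (V - S) (V - S) + 2 * cut_size m S (V - S)"
proof -
  have fin: "finite S" "finite (V - S)"
    using assms finite_subset by (auto simp: multigraph_def)
  have "cut_size m V V = cut_size m (S \<union> (V - S)) (S \<union> (V - S))"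
    using assms(2) by (simp add: Un_absorb1)
  also have "\<dots> = cut_size m S S + cut_size m S (V - S)
      + (cut_size m (V - S) S + cut_size m (V - S) (V - S))"
    using fin by (simp only: cut_size_Un_left cut_size_Un_right Diff_disjoint)
  finally show ?thesis
    using cut_size_commute[OF assms(1), of "V - S" S] by simp
qed

lemma cut_size_self_card_le_1:
  assumes "multigraph V m" "card V \<le> 1"
  shows "cut_size m V V = 0"
proof -
  have "V = {} \<or> (\<exists>x. V = {x})"
    using assms by (metis card_0_eq card_1_singletonE le_Suc_eq le_zero_eq One_nat_def
        multigraph_def)
  then show ?thesis using assms by (auto simp: cut_size_def multigraph_def)
qed

lemma num_edges_eq_cut_size: "num_edges V m = cut_size m V V div 2"
  by (simp add: num_edges_def cut_size_def)

lemma edge_conn_le_cut: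
  assumes "finite W" "S \<subseteq> W" "S \<noteq> {}" "S \<noteq> W"
  shows "edge_conn W h \<le> cut_size h S (W - S)"
proof (cases "card W \<le> 1")
  case False
  have "{cut_size h S (W - S) | S. S \<subseteq> W \<and> S \<noteq> {} \<and> S \<noteq> W}
      \<subseteq> (\<lambda>S. cut_size h S (W - S)) ` Pow W"
    by auto
  then have "finite {cut_size h S (W - S) | S. S \<subseteq> W \<and> S \<noteq> {} \<and> S \<noteq> W}"
    using assms(1) finite_subset by blast
  then show ?thesis
    using False assms unfolding edge_conn_def by (auto intro!: Min_le)
qed (simp add: edge_conn_def)

lemma edge_conn_attained:
  assumes "finite W" "2 \<le> card W"
  obtains S where "S \<subseteq> W" "S \<noteq> {}" "S \<noteq> W" "edge_conn W h = cut_size h S (W - S)"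
proof -
  let ?A = "{cut_size h S (W - S) | S. S \<subseteq> W \<and> S \<noteq> {} \<and> S \<noteq> W}"
  have "?A \<subseteq> (\<lambda>S. cut_size h S (W - S)) ` Pow W"
    by auto
  then have "finite ?A"
    using assms(1) finite_subset by blast
  moreover obtain x where "x \<in> W" using assms by fastforce
  moreover have "{x} \<noteq> W" using assms by auto
  ultimately have "?A \<noteq> {}" by blast
  with \<open>finite ?A\<close> have "Min ?A \<in> ?A" by (rule Min_in)
  moreover have "edge_conn W h = Min ?A" using assms by (simp add: edge_conn_def)
  ultimately show ?thesis using that by auto
qed

lemma subgraph_edge_conn_le_cut:
  assumes "finite V" "subgraph W h V g" "S \<subseteq> V" "W \<inter> S \<noteq> {}" "\<not> W \<subseteq> S"
  shows "edge_conn W h \<le> cut_size g S (V - S)"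
proof -
  have "finite W"
    using assms(2) by (simp add: subgraph_def multigraph_def)
  then have "edge_conn W h \<le> cut_size h (W \<inter> S) (W - W \<inter> S)"
    using assms(4,5) by (intro edge_conn_le_cut) auto
  also have "\<dots> \<le> cut_size g S (V - S)"
    using assms(1-3) finite_subset by (intro cut_size_mono) (auto simp: subgraph_def)
  finally show ?thesis .
qed

lemma edge_conn_le_if_max_ec_le:
  assumes "multigraph V m" "max_ec_le k V m"
  shows "edge_conn V m \<le> k"
  using assms by (simp add: max_ec_le_def subgraph_def)

lemma subgraph_trans:
  "subgraph W h S g \<Longrightarrow> subgraph S g V m \<Longrightarrow> subgraph W h V m"
  unfolding subgraph_def by (meson le_trans order_trans)

lemma multigraph_induced:
  assumes "multigraph V m" "S \<subseteq> V"
  shows "multigraph S (induced m S)"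
  using assms finite_subset unfolding multigraph_def induced_def by auto

lemma subgraph_induced:
  assumes "multigraph V m" "S \<subseteq> V"
  shows "subgraph S (induced m S) V m"
  using assms multigraph_induced[OF assms] unfolding subgraph_def induced_def by auto

lemma cut_size_induced: "cut_size (induced m S) S S = cut_size m S S"
  unfolding cut_size_def induced_def by simp

lemma max_ec_le_induced:
  assumes "multigraph V m" "S \<subseteq> V" "max_ec_le k V m"
  shows "max_ec_le k S (induced m S)"
  using assms subgraph_induced[OF assms(1,2)] subgraph_trans unfolding max_ec_le_def by blast

lemma card_pred_split:
  assumes "finite V" "S \<subseteq> V" "S \<noteq> {}" "S \<noteq> V"
  shows "card V - 1 = (card S - 1) + (card (V - S) - 1) + 1"
proof -
  have "card S > 0" "card (V - S) > 0"
    using assms finite_subset by (auto simp: card_gt_0_iff)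
  moreover have "card V = card S + card (V - S)"
    using assms(1,2) by (metis card_Diff_subset card_mono finite_subset le_add_diff_inverse)
  ultimately show ?thesis by linarith
qed

lemma min_cut_induct [consumes 1, case_names small split]:
  assumes "multigraph V m"
    and small: "\<And>V m. multigraph V m \<Longrightarrow> card V \<le> 1 \<Longrightarrow> P V m"
    and split: "\<And>V m S. multigraph V m \<Longrightarrow> S \<subseteq> V \<Longrightarrow> S \<noteq> {} \<Longrightarrow> S \<noteq> V
      \<Longrightarrow> edge_conn V m = cut_size m S (V - S)
      \<Longrightarrow> P S (induced m S) \<Longrightarrow> P (V - S) (induced m (V - S)) \<Longrightarrow> P V m"
  shows "P V m"
  using assms(1)
proof (induction "card V" arbitrary: V m rule: less_induct)
  case less
  show ?case
  proof (cases "card V \<le> 1")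
    case False
    have fin: "finite V" using less.prems by (simp add: multigraph_def)
    have "2 \<le> card V" using False by simp
    then obtain S where S: "S \<subseteq> V" "S \<noteq> {}" "S \<noteq> V" "edge_conn V m = cut_size m S (V - S)"
      by (rule edge_conn_attained[OF fin])
    have "card S < card V" "card (V - S) < card V"
      using S fin by (auto intro!: psubset_card_mono)
    then have "P S (induced m S)" "P (V - S) (induced m (V - S))"
      using less.hyps multigraph_induced[OF less.prems] S(1) by blast+
    then show ?thesis using split[OF less.prems S] by blast
  qed (use less.prems small in blast)
qed

lemma sum_sum_indicator:
  assumes "finite A" "finite B"
  shows "(\<Sum>x\<in>A. \<Sum>y\<in>B. if x = u \<and> y = v then 1 else 0 :: nat) = (if u \<in> A \<and> v \<in> B then 1 else 0)"
proof -
  have "(\<Sum>y\<in>B. if x = u \<and> y = v then 1 else 0 :: nat) = (if x = u \<and> v \<in> B then 1 else 0)" for x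
    using assms(2) by (cases "x = u") auto
  then show ?thesis using assms(1) by simp
qed

lemma cut_size_add_edge:
  assumes "finite S" "finite T" "u \<noteq> v"
  shows "cut_size (add_edge m u v) S T
    = cut_size m S T + (if u \<in> S \<and> v \<in> T then 1 else 0) + (if v \<in> S \<and> u \<in> T then 1 else 0)"
proof -
  have pointwise: "add_edge m u v x y
      = m x y + (if x = u \<and> y = v then 1 else 0) + (if x = v \<and> y = u then 1 else 0)" for x y
    using assms(3) unfolding add_edge_def by auto
  have "cut_size (add_edge m u v) S T
      = cut_size m S T + (\<Sum>x\<in>S. \<Sum>y\<in>T. if x = u \<and> y = v then 1 else 0)
        + (\<Sum>x\<in>S. \<Sum>y\<in>T. if x = v \<and> y = u then 1 else 0)"
    unfolding cut_size_def pointwise sum.distrib ..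
  then show ?thesis
    using sum_sum_indicator[OF assms(1,2)] by simp
qed

lemma multigraph_add_edge:
  assumes "multigraph V m" "u \<in> V" "v \<in> V" "u \<noteq> v"
  shows "multigraph V (add_edge m u v)"
  using assms unfolding multigraph_def add_edge_def by auto

lemma num_edges_add_edge:
  assumes "multigraph V m" "u \<in> V" "v \<in> V" "u \<noteq> v"
  shows "num_edges V (add_edge m u v) = num_edges V m + 1"
  using assms cut_size_add_edge[of V V u v m]
  by (simp add: num_edges_eq_cut_size multigraph_def)

lemma cut_size_self_le_if_max_ec_le:
  assumes "multigraph V m" "max_ec_le k V m"
  shows "cut_size m V V \<le> 2 * k * (card V - 1)"
  using assms
proof (induction rule: min_cut_induct)
  case (small V m)
  then show ?case by (simp add: cut_size_self_card_le_1)
next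
  case (split V m S)
  have "cut_size m S (V - S) \<le> k"
    using edge_conn_le_if_max_ec_le[OF split.hyps(1) split.prems] split.hyps(5) by simp
  moreover have "cut_size m S S \<le> 2 * k * (card S - 1)"
    using split.IH(1) max_ec_le_induced[OF split.hyps(1,2) split.prems]
    by (simp add: cut_size_induced)
  moreover have "cut_size m (V - S) (V - S) \<le> 2 * k * (card (V - S) - 1)"
    using split.IH(2) max_ec_le_induced[OF split.hyps(1) Diff_subset split.prems]
    by (simp add: cut_size_induced)
  moreover have "2 * k * (card V - 1) = 2 * k * (card S - 1) + 2 * k * (card (V - S) - 1) + 2 * k"
    using card_pred_split[OF _ split.hyps(2-4)] split.hyps(1)
    by (simp add: multigraph_def distrib_left)
  ultimately show ?case
    unfolding cut_size_self_split[OF split.hyps(1,2)] by linarith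
qed

lemma num_edges_le_if_max_ec_le:
  assumes "multigraph V m" "max_ec_le k V m"
  shows "num_edges V m \<le> k * (card V - 1)"
  using div_le_mono[OF cut_size_self_le_if_max_ec_le[OF assms], of 2]
  by (simp add: num_edges_eq_cut_size)

lemma k_maximal_add_edge_witness:
  assumes "k_maximal k V m" "u \<in> V" "v \<in> V" "u \<noteq> v"
  obtains W h where "subgraph W h V (add_edge m u v)" "k < edge_conn W h" "u \<in> W" "v \<in> W"
proof -
  have "\<not> max_ec_le k V (add_edge m u v)" using assms unfolding k_maximal_def by blast
  then obtain W h where W: "subgraph W h V (add_edge m u v)" "\<not> edge_conn W h \<le> k"
    unfolding max_ec_le_def by blast
  have mg: "multigraph W h" and le: "\<And>x y. h x y \<le> add_edge m u v x y"
    using W(1) unfolding subgraph_def by auto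
  have "u \<in> W \<and> v \<in> W"
  proof (rule ccontr)
    assume outside: "\<not> (u \<in> W \<and> v \<in> W)"
    have "h x y \<le> m x y" for x y
    proof (cases "(x = u \<and> y = v) \<or> (x = v \<and> y = u)")
      case True
      then have "h x y = 0" using outside mg unfolding multigraph_def by auto
      then show ?thesis by simp
    next
      case False
      then show ?thesis using le[of x y] unfolding add_edge_def by auto
    qed
    then have "subgraph W h V m" using W(1) by (simp add: subgraph_def)
    then show False using assms(1) W(2) unfolding k_maximal_def max_ec_le_def by blast
  qed
  then show ?thesis using W that by simp
qed

lemma k_maximal_cut_ge:
  assumes "multigraph V m" "k_maximal k V m" "S \<subseteq> V" "S \<noteq> {}" "S \<noteq> V"
  shows "k \<le> cut_size m S (V - S)"
proof -
  obtain u v where uv: "u \<in> S" "v \<in> V - S" using assms(3-5) by blast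
  then obtain W h where W: "subgraph W h V (add_edge m u v)" "k < edge_conn W h" "u \<in> W" "v \<in> W"
    using k_maximal_add_edge_witness[OF assms(2)] assms(3) by blast
  have fin: "finite S" "finite (V - S)"
    using assms(1,3) finite_subset by (auto simp: multigraph_def)
  have "edge_conn W h \<le> cut_size (add_edge m u v) S (V - S)"
    using W uv assms(1,3) by (intro subgraph_edge_conn_le_cut) (auto simp: multigraph_def)
  also have "\<dots> = cut_size m S (V - S) + 1"
    using uv cut_size_add_edge[OF fin, of u v m] by auto
  finally show ?thesis using W(2) by simp
qed

lemma k_maximal_induced:
  assumes "multigraph V m" "k_maximal k V m" "S \<subseteq> V" "cut_size m S (V - S) \<le> k"
  shows "k_maximal k S (induced m S)"
  unfolding k_maximal_def
proof (intro conjI ballI impI notI)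
  show "max_ec_le k S (induced m S)"
    using assms max_ec_le_induced unfolding k_maximal_def by blast
next
  fix u v assume uv: "u \<in> S" "v \<in> S" "u \<noteq> v" and le: "max_ec_le k S (add_edge (induced m S) u v)"
  obtain W h where W: "subgraph W h V (add_edge m u v)" "k < edge_conn W h" "u \<in> W"
    using k_maximal_add_edge_witness[OF assms(2)] uv assms(3) by blast
  have fin: "finite S" "finite (V - S)"
    using assms(1,3) finite_subset by (auto simp: multigraph_def)
  have "W \<subseteq> S"
  proof (rule ccontr)
    assume "\<not> W \<subseteq> S"
    then have "edge_conn W h \<le> cut_size (add_edge m u v) S (V - S)"
      using W uv assms(1,3) by (intro subgraph_edge_conn_le_cut) (auto simp: multigraph_def)
    also have "\<dots> = cut_size m S (V - S)"
      using uv by (simp add: cut_size_add_edge[OF fin])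
    finally show False using W(2) assms(4) by simp
  qed
  have "h x y \<le> add_edge (induced m S) u v x y" for x y
  proof (cases "x \<in> W \<and> y \<in> W")
    case True
    then have "add_edge (induced m S) u v x y = add_edge m u v x y"
      using \<open>W \<subseteq> S\<close> uv unfolding add_edge_def induced_def by auto
    then show ?thesis using W(1) unfolding subgraph_def by auto
  next
    case False
    then have "h x y = 0" using W(1) unfolding subgraph_def multigraph_def by auto
    then show ?thesis by simp
  qed
  then have "subgraph W h S (add_edge (induced m S) u v)"
    using W(1) \<open>W \<subseteq> S\<close> by (simp add: subgraph_def)
  then show False using le W(2) unfolding max_ec_le_def by (simp add: not_le[symmetric])
qed

lemma cut_size_self_k_maximal:
  assumes "multigraph V m" "k_maximal k V m"
  shows "cut_size m V V = 2 * k * (card V - 1)"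
  using assms
proof (induction rule: min_cut_induct)
  case (small V m)
  then show ?case by (simp add: cut_size_self_card_le_1)
next
  case (split V m S)
  have me: "max_ec_le k V m" using split.prems by (simp add: k_maximal_def)
  have cut: "cut_size m S (V - S) = k"
    using edge_conn_le_if_max_ec_le[OF split.hyps(1) me] split.hyps(5)
      k_maximal_cut_ge[OF split.hyps(1) split.prems split.hyps(2-4)] by simp
  have "V - (V - S) = S" using split.hyps(2) by blast
  then have "cut_size m (V - S) (V - (V - S)) \<le> k"
    using cut cut_size_commute[OF split.hyps(1), of "V - S" S] by simp
  then have "cut_size m (V - S) (V - S) = 2 * k * (card (V - S) - 1)"
    using split.IH(2) k_maximal_induced[OF split.hyps(1) split.prems Diff_subset]
    by (simp add: cut_size_induced)
  moreover have "cut_size m S S = 2 * k * (card S - 1)"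
    using split.IH(1) k_maximal_induced[OF split.hyps(1) split.prems split.hyps(2)] cut
    by (simp add: cut_size_induced)
  moreover have "2 * k * (card V - 1) = 2 * k * (card S - 1) + 2 * k * (card (V - S) - 1) + 2 * k"
    using card_pred_split[OF _ split.hyps(2-4)] split.hyps(1)
    by (simp add: multigraph_def distrib_left)
  ultimately show ?case
    unfolding cut_size_self_split[OF split.hyps(1,2)] cut by linarith
qed

lemma num_edges_k_maximal:
  assumes "multigraph V m" "k_maximal k V m"
  shows "num_edges V m = k * (card V - 1)"
  using cut_size_self_k_maximal[OF assms] by (simp add: num_edges_eq_cut_size)

lemma k_maximal_if_num_edges_max:
  assumes "multigraph V m" "max_ec_le k V m"
    and max: "\<And>g. multigraph V g \<Longrightarrow> max_ec_le k V g \<Longrightarrow> num_edges V g \<le> num_edges V m"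
  shows "k_maximal k V m"
  unfolding k_maximal_def
proof (intro conjI ballI impI notI)
  fix u v assume uv: "u \<in> V" "v \<in> V" "u \<noteq> v" and "max_ec_le k V (add_edge m u v)"
  then have "num_edges V (add_edge m u v) \<le> num_edges V m"
    using max multigraph_add_edge[OF assms(1) uv] by blast
  then show False using num_edges_add_edge[OF assms(1) uv] by simp
qed (fact assms(2))

lemma max_ec_le_zero: "max_ec_le k V (\<lambda>_ _. 0)"
  unfolding max_ec_le_def
proof (intro allI impI)
  fix W h assume sub: "subgraph W h V (\<lambda>_ _. 0)"
  then have zero: "h = (\<lambda>_ _. 0)" unfolding subgraph_def by (auto intro!: ext)
  have fin: "finite W" using sub by (simp add: subgraph_def multigraph_def)
  show "edge_conn W h \<le> k"
  proof (cases "card W \<le> 1")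
    case False
    then have "2 \<le> card W" by simp
    then obtain S where "edge_conn W h = cut_size h S (W - S)"
      by (rule edge_conn_attained[OF fin])
    then show ?thesis by (simp add: zero cut_size_def)
  qed (simp add: edge_conn_def)
qed

text \<open>The maximum defining F(n,k) is attained by some graph, which is then k-maximal.\<close>

lemma F_max_eq: "F_max n k = k * (n - 1)"
proof -
  let ?A = "{num_edges W h | W (h :: nat \<Rightarrow> nat \<Rightarrow> nat).
      multigraph W h \<and> card W = n \<and> max_ec_le k W h}"
  have "a \<le> k * (n - 1)" if "a \<in> ?A" for a
  proof -
    from that obtain W and h :: "nat \<Rightarrow> nat \<Rightarrow> nat" where
      Wh: "a = num_edges W h" "multigraph W h" "card W = n" "max_ec_le k W h"
      by blast
    then show ?thesis using num_edges_le_if_max_ec_le[OF Wh(2,4)] by simp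
  qed
  then have fin: "finite ?A" by (intro finite_subset[of ?A "{..k * (n - 1)}"]) auto
  have "multigraph {0..<n} (\<lambda>_ _. 0)" by (simp add: multigraph_def)
  then have "num_edges {0..<n} (\<lambda>_ _. 0) \<in> ?A"
    using max_ec_le_zero by fastforce
  then have nonempty: "?A \<noteq> {}" by blast
  with fin have "Max ?A \<in> ?A" by (rule Max_in)
  then obtain W and h :: "nat \<Rightarrow> nat \<Rightarrow> nat" where
    Wh: "Max ?A = num_edges W h" "multigraph W h" "card W = n" "max_ec_le k W h"
    by blast
  have "k_maximal k W h"
  proof (rule k_maximal_if_num_edges_max[OF Wh(2,4)])
    fix g assume "multigraph W g" "max_ec_le k W g"
    then have "num_edges W g \<in> ?A" using Wh(3) by blast
    then show "num_edges W g \<le> num_edges W h"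
      unfolding Wh(1)[symmetric] by (rule Max_ge[OF fin])
  qed
  then have "Max ?A = k * (n - 1)" using num_edges_k_maximal[OF Wh(2)] Wh(1,3) by simp
  then show ?thesis unfolding F_max_def using cSup_eq_Max[OF fin nonempty] by simp
qed

theorem lemma3p5:
  fixes V :: "'a set" and m :: "'a \<Rightarrow> 'a \<Rightarrow> nat" and n k :: nat
  assumes "k > 0" and "n > 0" and "multigraph V m" and "card V = n"
  shows "in_F_family n k V m \<longleftrightarrow> k_maximal k V m"
proof
  assume "in_F_family n k V m"
  then have le: "max_ec_le k V m" and count: "num_edges V m = k * (n - 1)"
    by (auto simp: in_F_family_def F_max_eq)
  show "k_maximal k V m"
  proof (rule k_maximal_if_num_edges_max[OF assms(3) le])
    fix g assume "multigraph V g" "max_ec_le k V g"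
    then show "num_edges V g \<le> num_edges V m"
      using num_edges_le_if_max_ec_le[of V g k] count assms(4) by simp
  qed
next
  assume max: "k_maximal k V m"
  then show "in_F_family n k V m"
    using assms(3,4) num_edges_k_maximal[OF assms(3) max]
    by (simp add: in_F_family_def k_maximal_def F_max_eq)
qed

end
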